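(* For every positive integer $n$, $$\operatorname{lcm}\left({n\brack 0}_q,{n\brack 1}_q,\ldots,{n\brack n}_q\right)=\prod_{\substack{1\le d\le n\\ d\nmid (n+1)}}\Phi_d(q)=\frac{\operatorname{lcm}([1]_q,\ldots,[n+1]_q)}{[n+1]_q}.$$ *)

theory Defs
  imports Complex_Main "HOL-Computational_Algebra.Polynomial_Factorial" "HOL-Computational_Algebra.Field_as_Ring"
begin

definition qint :: "nat \<Rightarrow> complex poly" where
  "qint m = (\<Sum>i<m. monom 1 i)"

definition qfact :: "nat \<Rightarrow> complex poly" where
  "qfact m = (\<Prod>i=1..m. qint i)"

definition qbinom :: "nat \<Rightarrow> nat \<Rightarrow> complex poly" where
  "qbinom n k = (if k \<le> n then qfact n div (qfact k * qfact (n - k)) else 0)"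

definition cyclo :: "nat \<Rightarrow> complex poly" where
  "cyclo d = (\<Prod>k\<in>{k. 1 \<le> k \<and> k \<le> d \<and> coprime k d}.
                 [:- cis (2 * pi * real k / real d), 1:])"

end

theory Submission
  imports Defs
begin

text \<open>
  Every polynomial involved is a product of cyclotomic polynomials, and the
  cyclotomic polynomials \<open>\<Phi>\<^sub>d\<close> are monic, squarefree and pairwise coprime: \<open>\<Phi>\<^sub>d\<close> is the
  product of the linear factors \<open>q - \<zeta>\<close> over the primitive \<open>d\<close>-th roots of unity \<open>\<zeta>\<close>,
  and these root sets are disjoint.  Hence the lcm of a family of products
  \<open>\<Prod>d\<in>D\<^sub>i. \<Phi>\<^sub>d\<close> is \<open>\<Prod>d\<in>\<Union>D\<^sub>i. \<Phi>\<^sub>d\<close>, and the theorem reduces to set identities.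

  From it follow
  \<open>[m]\<^sub>q! = \<Prod>d\<le>N. \<Phi>\<^sub>d^\<lfloor>m/d\<rfloor>\<close> and a \<open>q\<close>-analogue of Kummer's theorem,
  \<open>[n k]\<^sub>q = \<Prod>{\<Phi>\<^sub>d | adding k and n-k carries modulo d}\<close>.  A carry modulo \<open>d \<le> n\<close>
  occurs for some \<open>k\<close> exactly when \<open>d \<nmid> n+1\<close>; collecting the index sets gives both
  equalities of the theorem.
\<close>

definition lin_prod :: "'a::field set \<Rightarrow> 'a poly" where
  "lin_prod S = (\<Prod>z\<in>S. [:-z, 1:])"

lemma lin_prod_nonzero [simp]: "lin_prod S \<noteq> 0"
  by (cases "finite S") (simp_all add: lin_prod_def)

lemma normalize_lin_prod [simp]: "normalize (lin_prod S) = (lin_prod S :: 'a::field_gcd poly)"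
  by (simp add: normalize_poly_eq_map_poly lin_prod_def lead_coeff_prod)

lemma poly_lin_prod_eq_0: "finite S \<Longrightarrow> poly (lin_prod S) z = 0 \<longleftrightarrow> z \<in> S"
  by (simp add: lin_prod_def poly_prod)

lemma degree_lin_prod: "finite S \<Longrightarrow> degree (lin_prod S) = card S"
  by (simp add: lin_prod_def degree_prod_eq_sum_degree)

lemma lin_prod_dvd_mono: "finite T \<Longrightarrow> S \<subseteq> T \<Longrightarrow> lin_prod S dvd lin_prod T"
  unfolding lin_prod_def by (rule prod_dvd_prod_subset)

text \<open>A polynomial vanishing on \<open>S\<close> is divisible by \<open>lin_prod S\<close>: the linear factors are
  distinct primes, hence pairwise coprime.\<close>
lemma lin_prod_dvd:
  fixes p :: "'a::field_gcd poly"
  assumes "finite S" and "\<And>z. z \<in> S \<Longrightarrow> poly p z = 0"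
  shows "lin_prod S dvd p"
  using assms
proof (induction S rule: finite_induct)
  case empty
  then show ?case by (simp add: lin_prod_def)
next
  case (insert z S)
  have "prime_elem [:-z, 1:]" by (rule prime_elem_linear_field_poly) simp
  moreover have "\<not> [:-z, 1:] dvd lin_prod S"
    using insert.hyps by (simp add: poly_eq_0_iff_dvd[symmetric] poly_lin_prod_eq_0)
  ultimately have "coprime [:-z, 1:] (lin_prod S)" using prime_elem_imp_coprime by blast
  moreover have "[:-z, 1:] dvd p" using insert.prems by (simp add: poly_eq_0_iff_dvd)
  ultimately have "[:-z, 1:] * lin_prod S dvd p" using insert by (intro divides_mult) auto
  then show ?case using insert.hyps by (simp add: lin_prod_def)
qed

lemma Lcm_lin_prod:
  fixes A :: "'i \<Rightarrow> 'a::field_gcd set"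
  assumes "finite I" and "\<And>i. i \<in> I \<Longrightarrow> finite (A i)"
  shows "Lcm ((\<lambda>i. lin_prod (A i)) ` I) = lin_prod (\<Union>i\<in>I. A i)"
proof (rule Lcm_eqI)
  have fin: "finite (\<Union>i\<in>I. A i)" using assms by auto
  show "b dvd lin_prod (\<Union>i\<in>I. A i)" if "b \<in> (\<lambda>i. lin_prod (A i)) ` I" for b
    using that fin by (auto intro!: lin_prod_dvd_mono)
  show "lin_prod (\<Union>i\<in>I. A i) dvd c" if dvd_c: "\<And>b. b \<in> (\<lambda>i. lin_prod (A i)) ` I \<Longrightarrow> b dvd c"
    for c
  proof (rule lin_prod_dvd[OF fin])
    fix z assume "z \<in> (\<Union>i\<in>I. A i)"
    then obtain i where i: "i \<in> I" "z \<in> A i" by blast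
    have "[:-z, 1:] dvd lin_prod (A i)"
      using i assms(2) by (simp add: poly_eq_0_iff_dvd[symmetric] poly_lin_prod_eq_0)
    also have "lin_prod (A i) dvd c" using dvd_c i by blast
    finally show "poly c z = 0" by (simp add: poly_eq_0_iff_dvd)
  qed
qed simp

lemma qint_times_X_minus_1: "qint m * [:-1, 1:] = monom 1 m - 1"
proof (induction m)
  case 0
  then show ?case by (simp add: qint_def)
next
  case (Suc m)
  have shift: "p * [:-1, 1:] = pCons 0 p - p" for p :: "complex poly"
    by (simp add: poly_eq_iff coeff_pCons split: nat.split)
  have "qint (Suc m) * [:-1, 1:] = qint m * [:-1, 1:] + monom 1 m * [:-1, 1:]"
    by (simp add: qint_def algebra_simps)
  also have "monom 1 m * [:-1, 1:] = (monom 1 (Suc m) - monom 1 m :: complex poly)"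
    using shift[of "monom 1 m"] by (simp only: monom_Suc)
  finally show ?case using Suc by simp
qed

text \<open>\<open>q\<^sup>m - 1\<close> is the product of \<open>q - \<zeta>\<close> over all \<open>m\<close>-th roots of unity: both are monic of
  degree \<open>m\<close>, and the latter divides the former.\<close>
lemma lin_prod_roots_unity:
  assumes "m > 0"
  shows "lin_prod {z::complex. z ^ m = 1} = monom 1 m - 1"
proof -
  let ?U = "{z::complex. z ^ m = 1}" and ?p = "monom 1 m - 1 :: complex poly"
  have fin: "finite ?U" using assms by (simp add: finite_roots_unity)
  have "lin_prod ?U dvd ?p" by (rule lin_prod_dvd[OF fin]) (simp add: poly_monom)
  then obtain r where r: "?p = lin_prod ?U * r" by (elim dvdE)
  have deg_p: "degree ?p = m"
  proof -
    have "degree (monom 1 m + (- 1) :: complex poly) = m"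
      using assms by (subst degree_add_eq_left) (simp_all add: degree_monom_eq)
    then show ?thesis by simp
  qed
  then have "r \<noteq> 0" using r assms by auto
  then have "degree r = 0"
    using r deg_p degree_lin_prod[OF fin] card_roots_unity_eq[OF assms]
    by (simp add: degree_mult_eq)
  then obtain c where c: "r = [:c:]" by (elim degree_eq_zeroE)
  have "lead_coeff ?p = lead_coeff (lin_prod ?U) * c" using r c by (simp add: lead_coeff_mult)
  then have "c = 1"
    using assms deg_p by (simp add: degree_monom_eq lin_prod_def lead_coeff_prod)
  then have "?p = lin_prod ?U" using r c by simp
  then show ?thesis by (rule sym)
qed

definition prim_roots :: "nat \<Rightarrow> complex set" where
  "prim_roots d = {z. z ^ d = 1 \<and> (\<forall>e. 0 < e \<and> e < d \<longrightarrow> z ^ e \<noteq> 1)}"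

lemma finite_prim_roots: "d \<noteq> 0 \<Longrightarrow> finite (prim_roots d)"
  by (rule finite_subset[of _ "{z. z ^ d = 1}"]) (auto simp: prim_roots_def finite_roots_unity)

text \<open>A root of unity has only one order, so the root sets of distinct \<open>\<Phi>\<^sub>d\<close> are disjoint.\<close>
lemma prim_roots_order_unique:
  assumes "z \<in> prim_roots d" "z \<in> prim_roots d'" "d \<noteq> 0" "d' \<noteq> 0"
  shows "d = d'"
proof (rule ccontr)
  assume "d \<noteq> d'"
  then consider "d < d'" | "d' < d" by linarith
  then show False using assms unfolding prim_roots_def by cases auto
qed

lemma prim_roots_1: "prim_roots 1 = {1}"
  by (auto simp: prim_roots_def)

lemma power_mod_if_power_eq_1:
  fixes x :: "'a::monoid_mult"
  assumes "x ^ d = 1"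
  shows "x ^ k = x ^ (k mod d)"
proof -
  have "x ^ k = (x ^ d) ^ (k div d) * x ^ (k mod d)"
    by (simp only: power_mult[symmetric] power_add[symmetric] mult_div_mod_eq)
  then show ?thesis using assms by simp
qed

lemma roots_unity_eq_Union_prim_roots:
  assumes "m > 0"
  shows "{z. z ^ m = 1} = (\<Union>d\<in>{d. d dvd m}. prim_roots d)"
proof safe
  fix z :: complex assume z: "z ^ m = 1"
  define d where "d = (LEAST e. 0 < e \<and> z ^ e = 1)"
  have d: "0 < d \<and> z ^ d = 1" unfolding d_def by (rule LeastI[of _ m]) (use assms z in auto)
  have d_min: "d \<le> e" if "0 < e \<and> z ^ e = 1" for e
    unfolding d_def using that by (rule Least_le)
  have "z ^ (m mod d) = 1" using z d power_mod_if_power_eq_1[of z d m] by simp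
  then have "d dvd m" using d_min[of "m mod d"] d by (meson dvd_eq_mod_eq_0 mod_less_divisor not_gr0 not_le)
  moreover have "z \<in> prim_roots d" using d d_min by (force simp: prim_roots_def)
  ultimately show "z \<in> (\<Union>d\<in>{d. d dvd m}. prim_roots d)" by blast
next
  fix d z assume "d dvd m" "z \<in> prim_roots d"
  then show "z ^ m = 1" by (auto simp: prim_roots_def power_mult dvd_def)
qed

definition unit_root :: "nat \<Rightarrow> complex" where
  "unit_root d = cis (2 * pi / real d)"

lemma unit_root_pow: "unit_root d ^ k = cis (2 * pi * real k / real d)"
  by (simp add: unit_root_def DeMoivre mult_ac)

lemma unit_root_pow_eq_iff:
  assumes "d > 0"
  shows "unit_root d ^ a = unit_root d ^ b \<longleftrightarrow> a mod d = b mod d"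
proof -
  have "unit_root d ^ d = 1" by (simp add: unit_root_pow complex_eq_iff)
  then have reduce: "unit_root d ^ k = unit_root d ^ (k mod d)" for k
    by (rule power_mod_if_power_eq_1)
  have "inj_on (\<lambda>k. unit_root d ^ k) {..<d}"
    using bij_betw_roots_unity[OF assms] by (simp add: bij_betw_def unit_root_pow)
  then show ?thesis
    using assms by (subst (1 2) reduce) (auto dest: inj_onD)
qed

lemma unit_root_pow_eq_1: "d > 0 \<Longrightarrow> unit_root d ^ k = 1 \<longleftrightarrow> d dvd k"
  using unit_root_pow_eq_iff[of d k 0] by (simp add: dvd_eq_mod_eq_0)

lemma prim_roots_eq_coprime_powers:
  assumes d: "d > 0"
  shows "prim_roots d = (\<lambda>k. unit_root d ^ k) ` {k. 1 \<le> k \<and> k \<le> d \<and> coprime k d}"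
proof safe
  fix k assume k: "1 \<le> k" "k \<le> d" "coprime k d"
  show "unit_root d ^ k \<in> prim_roots d" unfolding prim_roots_def
  proof safe
    show "(unit_root d ^ k) ^ d = 1" by (simp add: unit_root_pow_eq_1 d flip: power_mult)
    fix e assume e: "0 < e" "e < d" "(unit_root d ^ k) ^ e = 1"
    then have "d dvd k * e" using d by (simp add: unit_root_pow_eq_1 flip: power_mult)
    then have "d dvd e" using k(3) by (metis coprime_commute coprime_dvd_mult_right_iff)
    then show False using e by (auto dest: dvd_imp_le)
  qed
next
  fix z assume z: "z \<in> prim_roots d"
  then have "z ^ d = 1" by (simp add: prim_roots_def)
  then obtain j where "z = unit_root d ^ j"
    using bij_betw_roots_unity[OF d] by (auto simp: bij_betw_def unit_root_pow)
  define k where "k = (if j mod d = 0 then d else j mod d)"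
  have zk: "z = unit_root d ^ k"
    using \<open>z = _\<close> d by (simp add: k_def unit_root_pow_eq_iff)
  have k: "1 \<le> k" "k \<le> d" using d by (auto simp: k_def)
  \<comment> \<open>with \<open>g = gcd k d\<close>, \<open>z\<close> already satisfies \<open>z^(d/g) = 1\<close>, so primitivity forces \<open>g = 1\<close>\<close>
  define g where "g = gcd k d"
  have "g > 0" using d by (simp add: g_def)
  have "z ^ (d div g) = unit_root d ^ (d * (k div g))"
    by (simp add: zk g_def flip: power_mult) (simp add: div_mult_swap mult.commute)
  then have "z ^ (d div g) = 1" using d by (simp add: unit_root_pow_eq_1)
  moreover have "0 < d div g" using d by (simp add: g_def div_greater_zero_iff)
  ultimately have "\<not> d div g < d" using z by (auto simp: prim_roots_def)
  then have "g = 1" using \<open>g > 0\<close> d by (metis div_less_dividend less_one nat_neq_iff)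
  then show "z \<in> (\<lambda>k. unit_root d ^ k) ` {k. 1 \<le> k \<and> k \<le> d \<and> coprime k d}"
    using zk k by (auto simp: g_def coprime_iff_gcd_eq_1)
qed

lemma cyclo_eq_lin_prod:
  assumes d: "d > 0"
  shows "cyclo d = lin_prod (prim_roots d)"
proof -
  let ?K = "{k. 1 \<le> k \<and> k \<le> d \<and> coprime k d}"
  have "inj_on (\<lambda>k. unit_root d ^ k) ?K"
  proof (rule inj_onI)
    fix a b assume "a \<in> ?K" "b \<in> ?K" "unit_root d ^ a = unit_root d ^ b"
    moreover have "x mod d = (if x = d then 0 else x)" if "1 \<le> x" "x \<le> d" for x
      using that by auto
    ultimately show "a = b" using d by (auto simp: unit_root_pow_eq_iff split: if_splits)
  qed
  then have "lin_prod (prim_roots d) = (\<Prod>k\<in>?K. [:-(unit_root d ^ k), 1:])"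
    by (simp add: lin_prod_def prim_roots_eq_coprime_powers[OF d] prod.reindex)
  then show ?thesis by (simp add: cyclo_def unit_root_pow)
qed

lemma cyclo_nonzero [simp]: "cyclo d \<noteq> 0"
  by (simp add: cyclo_def)

definition cyclo_prod :: "nat set \<Rightarrow> complex poly" where
  "cyclo_prod D = (\<Prod>d\<in>D. cyclo d)"

lemma cyclo_prod_eq_lin_prod:
  assumes "finite D" "0 \<notin> D"
  shows "cyclo_prod D = lin_prod (\<Union>d\<in>D. prim_roots d)"
proof -
  have "lin_prod (\<Union>d\<in>D. prim_roots d) = (\<Prod>d\<in>D. lin_prod (prim_roots d))"
    unfolding lin_prod_def using assms
    by (intro prod.UNION_disjoint) (auto intro!: finite_prim_roots gr0I dest: prim_roots_order_unique)
  also have "\<dots> = cyclo_prod D"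
    unfolding cyclo_prod_def using assms by (intro prod.cong refl) (metis cyclo_eq_lin_prod gr0I)
  finally show ?thesis by simp
qed

text \<open>The key lcm formula: disjoint root sets make the cyclotomic polynomials coprime.\<close>
lemma Lcm_cyclo_prod:
  assumes "finite I" and "\<And>i. i \<in> I \<Longrightarrow> finite (D i)" and "\<And>i. i \<in> I \<Longrightarrow> 0 \<notin> D i"
  shows "Lcm ((\<lambda>i. cyclo_prod (D i)) ` I) = cyclo_prod (\<Union>i\<in>I. D i)"
proof -
  have "Lcm ((\<lambda>i. cyclo_prod (D i)) ` I) = Lcm ((\<lambda>i. lin_prod (\<Union>d\<in>D i. prim_roots d)) ` I)"
    using assms by (intro arg_cong[where f = Lcm] image_cong refl) (simp add: cyclo_prod_eq_lin_prod)
  also have "\<dots> = lin_prod (\<Union>i\<in>I. \<Union>d\<in>D i. prim_roots d)"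
    using assms by (intro Lcm_lin_prod) (auto intro!: finite_prim_roots gr0I)
  also have "\<dots> = cyclo_prod (\<Union>i\<in>I. D i)"
    using assms by (subst cyclo_prod_eq_lin_prod) auto
  finally show ?thesis .
qed

lemma qint_eq_cyclo_prod:
  assumes m: "m > 0"
  shows "qint m = cyclo_prod {d. d dvd m \<and> d \<noteq> 1}"
proof -
  let ?U = "{z::complex. z ^ m = 1}"
  have "qint m * [:-1, 1:] = lin_prod ?U"
    by (simp only: lin_prod_roots_unity[OF m] qint_times_X_minus_1)
  also have "lin_prod ?U = [:-1, 1:] * lin_prod (?U - {1})"
    unfolding lin_prod_def using m by (subst prod.remove[of _ 1]) (auto simp: finite_roots_unity)
  finally have "qint m = lin_prod (?U - {1})"
    by (metis mult.commute mult_right_cancel pCons_eq_0_iff zero_neq_one)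
  also have "?U - {1} = (\<Union>d\<in>{d. d dvd m}. prim_roots d) - prim_roots 1"
    by (simp only: roots_unity_eq_Union_prim_roots[OF m] prim_roots_1)
  also have "\<dots> = (\<Union>d\<in>{d. d dvd m \<and> d \<noteq> 1}. prim_roots d)"
  proof -
    have "d \<noteq> 0" if "d dvd m" for d using that m by auto
    then show ?thesis by (blast dest: prim_roots_order_unique[of _ _ 1])
  qed
  also have "lin_prod \<dots> = cyclo_prod {d. d dvd m \<and> d \<noteq> 1}"
    using m by (intro cyclo_prod_eq_lin_prod[symmetric]) auto
  finally show ?thesis .
qed

lemma qint_eq_prod_power:
  assumes "1 \<le> m" "m \<le> N"
  shows "qint m = (\<Prod>d\<in>{2..N}. cyclo d ^ (if d dvd m then 1 else 0))"
proof -
  have "{d. d dvd m \<and> d \<noteq> 1} = {d\<in>{2..N}. d dvd m}"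
    using assms by (auto dest: dvd_imp_le)
  then have "qint m = cyclo_prod {d\<in>{2..N}. d dvd m}"
    using assms by (simp add: qint_eq_cyclo_prod)
  also have "\<dots> = (\<Prod>d\<in>{2..N}. if d dvd m then cyclo d else 1)"
    unfolding cyclo_prod_def by (rule prod.inter_filter) simp
  also have "\<dots> = (\<Prod>d\<in>{2..N}. cyclo d ^ (if d dvd m then 1 else 0))"
    by (intro prod.cong) auto
  finally show ?thesis .
qed

text \<open>\<open>[m]\<^sub>q! = \<Prod>\<^sub>2\<^sub>\<le>\<^sub>d\<^sub>\<le>\<^sub>N \<Phi>\<^sub>d^\<lfloor>m/d\<rfloor>\<close>: \<open>\<Phi>\<^sub>d\<close> divides one factor \<open>[i]\<^sub>q\<close> per multiple \<open>i \<le> m\<close> of \<open>d\<close>.\<close>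
lemma qfact_eq_prod_power:
  "m \<le> N \<Longrightarrow> qfact m = (\<Prod>d\<in>{2..N}. cyclo d ^ (m div d))"
proof (induction m)
  case 0
  then show ?case by (simp add: qfact_def)
next
  case (Suc m)
  have "qfact (Suc m) = qfact m * qint (Suc m)" by (simp add: qfact_def)
  also have "\<dots> = (\<Prod>d\<in>{2..N}. cyclo d ^ (m div d + (if d dvd Suc m then 1 else 0)))"
    using Suc qint_eq_prod_power[of "Suc m" N] by (simp add: prod.distrib power_add)
  also have "\<dots> = (\<Prod>d\<in>{2..N}. cyclo d ^ (Suc m div d))"
    by (intro prod.cong refl) (auto simp: div_Suc dvd_eq_mod_eq_0)
  finally show ?case .
qed

definition carry :: "nat \<Rightarrow> nat \<Rightarrow> nat \<Rightarrow> nat" where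
  "carry d a b = (a mod d + b mod d) div d"

lemma carry_le_1:
  assumes "d > 0"
  shows "carry d a b \<le> 1"
proof -
  have "a mod d + b mod d < 2 * d"
    using mod_less_divisor[OF assms, of a] mod_less_divisor[OF assms, of b] by linarith
  then have "(a mod d + b mod d) div d < 2" by (rule less_mult_imp_div_less)
  then show ?thesis unfolding carry_def by simp
qed

definition carry_set :: "nat \<Rightarrow> nat \<Rightarrow> nat set" where
  "carry_set n k = {d\<in>{2..n}. carry d k (n - k) = 1}"

lemma qbinom_eq_cyclo_prod:
  assumes "k \<le> n"
  shows "qbinom n k = cyclo_prod (carry_set n k)"
proof -
  let ?Q = "\<Prod>d\<in>{2..n}. cyclo d ^ carry d k (n - k)"
  have fact_k: "qfact k = (\<Prod>d\<in>{2..n}. cyclo d ^ (k div d))"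
    and fact_nk: "qfact (n - k) = (\<Prod>d\<in>{2..n}. cyclo d ^ ((n - k) div d))"
    using assms by (simp_all add: qfact_eq_prod_power)
  have "qfact n = (\<Prod>d\<in>{2..n}. cyclo d ^ (k div d + (n - k) div d + carry d k (n - k)))"
    using qfact_eq_prod_power[of n n] div_add1_eq[of k "n - k"] assms by (simp add: carry_def)
  also have "\<dots> = qfact k * qfact (n - k) * ?Q"
    by (simp add: fact_k fact_nk power_add prod.distrib)
  finally have "qbinom n k = ?Q"
    using assms by (simp add: qbinom_def fact_k fact_nk)
  also have "\<dots> = (\<Prod>d\<in>{2..n}. if carry d k (n - k) = 1 then cyclo d else 1)"
  proof (intro prod.cong refl)
    fix d assume "d \<in> {2..n}"
    then have "carry d k (n - k) \<le> 1" by (intro carry_le_1) simp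
    then show "cyclo d ^ carry d k (n - k) = (if carry d k (n - k) = 1 then cyclo d else 1)"
      by (cases "carry d k (n - k)") auto
  qed
  also have "\<dots> = cyclo_prod (carry_set n k)"
    unfolding cyclo_prod_def carry_set_def by (rule prod.inter_filter[symmetric]) simp
  finally show ?thesis .
qed

text \<open>For \<open>2 \<le> d \<le> n\<close>, some split \<open>n = k + (n - k)\<close> carries modulo \<open>d\<close> iff \<open>d \<nmid> n + 1\<close>:
  a carry forces \<open>n mod d \<le> d - 2\<close>, and conversely \<open>k = d - 1\<close> produces one.\<close>
lemma carry_exists_iff:
  fixes n d :: nat
  assumes "2 \<le> d" "d \<le> n"
  shows "(\<exists>k\<le>n. carry d k (n - k) = 1) \<longleftrightarrow> \<not> d dvd (n + 1)"
proof
  assume "\<exists>k\<le>n. carry d k (n - k) = 1"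
  then obtain k where k: "k \<le> n" "carry d k (n - k) = 1" by blast
  have "(k mod d + (n - k) mod d) mod d = n mod d" using k(1) by (simp add: mod_add_eq)
  then have sum: "k mod d + (n - k) mod d = d + n mod d"
    using div_mult_mod_eq[of "k mod d + (n - k) mod d" d] k(2) by (simp add: carry_def)
  have "k mod d < d" "(n - k) mod d < d" using assms by auto
  then have "n mod d \<noteq> d - 1" using sum by linarith
  then show "\<not> d dvd (n + 1)"
    using assms by (auto simp: mod_Suc dvd_eq_mod_eq_0 split: if_splits)
next
  assume nd: "\<not> d dvd (n + 1)"
  have "(n - (d - 1)) mod d \<noteq> 0"
  proof
    assume "(n - (d - 1)) mod d = 0"
    then have "d dvd (n - (d - 1)) + d" by auto
    moreover have "n - (d - 1) + d = n + 1" using assms by simp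
    ultimately show False using nd by simp
  qed
  then have "carry d (d - 1) (n - (d - 1)) \<ge> 1"
    using assms by (simp add: carry_def le_div_geq)
  then have "carry d (d - 1) (n - (d - 1)) = 1"
    using carry_le_1[of d "d - 1" "n - (d - 1)"] assms by linarith
  then show "\<exists>k\<le>n. carry d k (n - k) = 1" using assms by (intro exI[of _ "d - 1"]) simp
qed

lemma Union_carry_set:
  "(\<Union>k\<in>{0..n}. carry_set n k) = {d. 1 \<le> d \<and> d \<le> n \<and> \<not> d dvd (n + 1)}"
proof safe
  fix d assume d: "1 \<le> d" "d \<le> n" "\<not> d dvd (n + 1)"
  then have "2 \<le> d" by (cases "d = 1") auto
  then show "d \<in> (\<Union>k\<in>{0..n}. carry_set n k)"
    using carry_exists_iff[of d n] d by (auto simp: carry_set_def)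
qed (use carry_exists_iff in \<open>auto simp: carry_set_def\<close>)

lemma Union_proper_divisors:
  fixes N :: nat
  shows "(\<Union>m\<in>{1..N}. {d. d dvd m \<and> d \<noteq> 1}) = {2..N}"
proof safe
  fix m d :: nat assume "m \<in> {1..N}" "d dvd m" "d \<noteq> 1"
  then show "d \<in> {2..N}" by (cases "d = 0") (auto dest!: dvd_imp_le)
next
  fix d assume "d \<in> {2..N}"
  then show "d \<in> (\<Union>m\<in>{1..N}. {d. d dvd m \<and> d \<noteq> 1})" by (auto intro!: bexI[of _ d])
qed

lemma Lcm_qbinom:
  "Lcm (qbinom n ` {0..n}) = cyclo_prod {d. 1 \<le> d \<and> d \<le> n \<and> \<not> d dvd (n + 1)}"
proof -
  have "Lcm (qbinom n ` {0..n}) = Lcm ((\<lambda>k. cyclo_prod (carry_set n k)) ` {0..n})"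
    by (intro arg_cong[where f = Lcm] image_cong refl) (simp add: qbinom_eq_cyclo_prod)
  also have "\<dots> = cyclo_prod (\<Union>k\<in>{0..n}. carry_set n k)"
    by (rule Lcm_cyclo_prod) (auto simp: carry_set_def)
  finally show ?thesis by (simp only: Union_carry_set)
qed

lemma Lcm_qint:
  "Lcm (qint ` {1..N}) = cyclo_prod {2..N}"
proof -
  have "Lcm (qint ` {1..N}) = Lcm ((\<lambda>m. cyclo_prod {d. d dvd m \<and> d \<noteq> 1}) ` {1..N})"
    by (intro arg_cong[where f = Lcm] image_cong refl) (simp add: qint_eq_cyclo_prod)
  also have "\<dots> = cyclo_prod (\<Union>m\<in>{1..N}. {d. d dvd m \<and> d \<noteq> 1})"
    by (rule Lcm_cyclo_prod) auto
  finally show ?thesis by (simp only: Union_proper_divisors)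
qed

text \<open>Each \<open>2 \<le> d \<le> n + 1\<close> either divides \<open>n + 1\<close> or is one of the orders of the theorem;
  so \<open>\<Prod>\<^sub>2\<^sub>\<le>\<^sub>d\<^sub>\<le>\<^sub>n\<^sub>+\<^sub>1 \<Phi>\<^sub>d\<close> is \<open>[n+1]\<^sub>q\<close> times the product in the theorem.\<close>
lemma interval_split_by_divisibility:
  fixes n :: nat
  shows "{2..n + 1} = {d. d dvd (n + 1) \<and> d \<noteq> 1} \<union> {d. 1 \<le> d \<and> d \<le> n \<and> \<not> d dvd (n + 1)}"
proof safe
  fix d assume "d dvd n + 1" "d \<noteq> 1"
  then show "d \<in> {2..n + 1}" by (cases "d = 0") (auto dest!: dvd_imp_le)
next
  fix d assume "1 \<le> d" "d \<le> n" "\<not> d dvd n + 1"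
  then show "d \<in> {2..n + 1}" by (cases "d = 1") auto
qed (auto simp: le_Suc_eq)

theorem mainTheorem2:
  fixes n :: nat
  assumes "n \<ge> 1"
  shows "Lcm (qbinom n ` {0..n}) = (\<Prod>d\<in>{d. 1 \<le> d \<and> d \<le> n \<and> \<not> d dvd (n + 1)}. cyclo d)
       \<and> (\<Prod>d\<in>{d. 1 \<le> d \<and> d \<le> n \<and> \<not> d dvd (n + 1)}. cyclo d)
           = Lcm (qint ` {1..n + 1}) div qint (n + 1)"
proof
  let ?S = "{d. 1 \<le> d \<and> d \<le> n \<and> \<not> d dvd (n + 1)}"
  show "Lcm (qbinom n ` {0..n}) = (\<Prod>d\<in>?S. cyclo d)"
    using Lcm_qbinom by (simp add: cyclo_prod_def)
  have "Lcm (qint ` {1..n + 1}) = cyclo_prod {2..n + 1}" by (rule Lcm_qint)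
  also have "\<dots> = qint (n + 1) * cyclo_prod ?S"
    unfolding interval_split_by_divisibility cyclo_prod_def
    by (subst prod.union_disjoint) (auto simp: qint_eq_cyclo_prod cyclo_prod_def)
  finally show "(\<Prod>d\<in>?S. cyclo d) = Lcm (qint ` {1..n + 1}) div qint (n + 1)"
    by (simp add: cyclo_prod_def qint_eq_cyclo_prod)
qed

end
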